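(* Let $E=\begin{bmatrix}\widetilde E&0\\0&0\end{bmatrix}$ be a $(0,1,-1)$ matrix such that $E\mathbf 1=0$ and $\mathbf 1^TE=0^T$. Then $E$ is realizable if and only if $\widetilde E$ is realizable.
   Context: Two $(0,1)$ matrices $A,B$ are Gram mates if $AA^T=BB^T$, $A^TA=B^TB$ and $A\neq B$. A $(0,1,-1)$ matrix $F$ with $F\mathbf 1=0$ and $\mathbf 1^TF=0^T$ is realizable if there is a $(0,1)$ matrix $A$ such that $A$ and $A+F$ are Gram mates. *)

theory Defs
  imports "Jordan_Normal_Form.Matrix"
begin

definition ones_vec :: "nat \<Rightarrow> int vec" where
  "ones_vec n = vec n (\<lambda>_. 1)"

definition zero_one_mat :: "int mat \<Rightarrow> bool" where
  "zero_one_mat A \<longleftrightarrow> (\<forall>i<dim_row A. \<forall>j<dim_col A. A $$ (i,j) \<in> {0,1})"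

definition zero_one_neg_mat :: "int mat \<Rightarrow> bool" where
  "zero_one_neg_mat F \<longleftrightarrow> (\<forall>i<dim_row F. \<forall>j<dim_col F. F $$ (i,j) \<in> {0,1,-1})"

definition zero_line_sums :: "int mat \<Rightarrow> bool" where
  "zero_line_sums F \<longleftrightarrow>
     F *\<^sub>v ones_vec (dim_col F) = 0\<^sub>v (dim_row F) \<and>
     transpose_mat F *\<^sub>v ones_vec (dim_row F) = 0\<^sub>v (dim_col F)"

definition gram_mates :: "int mat \<Rightarrow> int mat \<Rightarrow> bool" where
  "gram_mates A B \<longleftrightarrow>
     zero_one_mat A \<and> zero_one_mat B \<and>
     dim_row A = dim_row B \<and> dim_col A = dim_col B \<and>
     A * transpose_mat A = B * transpose_mat B \<and>
     transpose_mat A * A = transpose_mat B * B \<and> A \<noteq> B"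

definition realizable :: "int mat \<Rightarrow> bool" where
  "realizable F \<longleftrightarrow> zero_one_neg_mat F \<and> zero_line_sums F \<and>
     (\<exists>A. A \<in> carrier_mat (dim_row F) (dim_col F) \<and> zero_one_mat A \<and> gram_mates A (A + F))"

end

theory Submission
  imports Defs
begin

(* Padding a matrix with zero rows and columns commutes with sums, transposes and products,
   so it preserves and reflects every ingredient of realizability; this gives the easy direction.
   Conversely, if A realizes the padded matrix, adding the padded matrix to A changes only the
   upper-left block A1 of A. In the upper-left blocks of the two row Gram matrices the
   contributions of the off-diagonal blocks are common to both sides and cancel; transposing
   handles the column Gram matrices. Hence A1 realizes the original matrix. *)

definition zero_pad_mat :: "nat \<Rightarrow> nat \<Rightarrow> 'a :: zero mat \<Rightarrow> 'a mat" where
  "zero_pad_mat p q A = four_block_mat A (0\<^sub>m (dim_row A) q) (0\<^sub>m p (dim_col A)) (0\<^sub>m p q)"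

lemma dim_zero_pad_mat [simp]:
  "dim_row (zero_pad_mat p q A) = dim_row A + p"
  "dim_col (zero_pad_mat p q A) = dim_col A + q"
  by (simp_all add: zero_pad_mat_def)

lemma index_zero_pad_mat [simp]:
  "i < dim_row A + p \<Longrightarrow> j < dim_col A + q \<Longrightarrow>
   zero_pad_mat p q A $$ (i, j) = (if i < dim_row A \<and> j < dim_col A then A $$ (i, j) else 0)"
  by (simp add: zero_pad_mat_def)

lemma zero_pad_mat_inject [simp]:
  "zero_pad_mat p q A = zero_pad_mat p q B \<longleftrightarrow> A = B"
proof
  assume eq: "zero_pad_mat p q A = zero_pad_mat p q B"
  then have dims: "dim_row A = dim_row B" "dim_col A = dim_col B"
    by (metis add_right_cancel dim_zero_pad_mat)+
  show "A = B"
  proof (rule eq_matI)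
    fix i j assume "i < dim_row B" "j < dim_col B"
    then show "A $$ (i, j) = B $$ (i, j)"
      using arg_cong[OF eq, of "\<lambda>M. M $$ (i, j)"] dims by simp
  qed (use dims in auto)
qed simp

lemma add_zero_pad_mat:
  "dim_row A = dim_row B \<Longrightarrow> dim_col A = dim_col B \<Longrightarrow>
   zero_pad_mat p q A + zero_pad_mat p q B = zero_pad_mat p q (A + B :: 'a :: monoid_add mat)"
  by (rule eq_matI) auto

lemma transpose_zero_pad_mat:
  "transpose_mat (zero_pad_mat p q A) = zero_pad_mat q p (transpose_mat A)"
  by (rule eq_matI) auto

lemma mult_zero_pad_mat:
  fixes A B :: "'a :: semiring_0 mat"
  assumes "A \<in> carrier_mat m k" "B \<in> carrier_mat k n"
  shows "zero_pad_mat p r A * zero_pad_mat r q B = zero_pad_mat p q (A * B)"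
  unfolding zero_pad_mat_def using assms
  by (subst mult_four_block_mat[of _ m k _ r _ p _ _ n _ q]) auto

lemma zero_pad_mat_mult_append_vec:
  fixes A :: "'a :: semiring_0 mat"
  assumes "v \<in> carrier_vec (dim_col A)" "w \<in> carrier_vec q"
  shows "zero_pad_mat p q A *\<^sub>v (v @\<^sub>v w) = (A *\<^sub>v v) @\<^sub>v 0\<^sub>v p"
  unfolding zero_pad_mat_def using assms
  by (subst four_block_mat_mult_vec[of _ "dim_row A" "dim_col A" _ q _ p]) auto

lemma zero_pad_mat_entries_in_iff:
  assumes "0 \<in> S"
  shows "(\<forall>i<dim_row (zero_pad_mat p q A). \<forall>j<dim_col (zero_pad_mat p q A). zero_pad_mat p q A $$ (i, j) \<in> S)
     \<longleftrightarrow> (\<forall>i<dim_row A. \<forall>j<dim_col A. A $$ (i, j) \<in> S)"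
  using assms by auto

lemma zero_one_mat_zero_pad_iff [simp]: "zero_one_mat (zero_pad_mat p q A) \<longleftrightarrow> zero_one_mat A"
  unfolding zero_one_mat_def by (rule zero_pad_mat_entries_in_iff) simp

lemma zero_one_neg_mat_zero_pad_iff [simp]:
  "zero_one_neg_mat (zero_pad_mat p q A) \<longleftrightarrow> zero_one_neg_mat A"
  unfolding zero_one_neg_mat_def by (rule zero_pad_mat_entries_in_iff) simp

lemma ones_vec_carrier [simp]: "ones_vec n \<in> carrier_vec n"
  by (simp add: ones_vec_def)

lemma ones_vec_split: "ones_vec (n + q) = ones_vec n @\<^sub>v ones_vec q"
  by (rule eq_vecI) (auto simp: ones_vec_def)

lemma zero_vec_split: "0\<^sub>v (n + p) = 0\<^sub>v n @\<^sub>v (0\<^sub>v p :: 'a :: zero vec)"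
  by (rule eq_vecI) auto

lemma zero_line_sums_zero_pad_iff [simp]:
  "zero_line_sums (zero_pad_mat p q A) \<longleftrightarrow> zero_line_sums A"
proof -
  have row_sums: "zero_pad_mat p q B *\<^sub>v ones_vec (dim_col B + q) = 0\<^sub>v (dim_row B + p)
      \<longleftrightarrow> B *\<^sub>v ones_vec (dim_col B) = 0\<^sub>v (dim_row B)" for B :: "int mat" and p q
  proof -
    have "zero_pad_mat p q B *\<^sub>v ones_vec (dim_col B + q) = (B *\<^sub>v ones_vec (dim_col B)) @\<^sub>v 0\<^sub>v p"
      unfolding ones_vec_split by (rule zero_pad_mat_mult_append_vec) auto
    moreover have "B *\<^sub>v ones_vec (dim_col B) \<in> carrier_vec (dim_row B)"
      by (rule carrier_vecI) simp
    ultimately show ?thesis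
      unfolding zero_vec_split using append_vec_eq[OF _ zero_carrier_vec] by simp
  qed
  show ?thesis
    using row_sums[of p q A] row_sums[of q p "transpose_mat A"]
    unfolding zero_line_sums_def by (simp add: transpose_zero_pad_mat)
qed

lemma zero_pad_mat_gram:
  fixes A :: "'a :: semiring_0 mat"
  shows "zero_pad_mat p q A * transpose_mat (zero_pad_mat p q A) = zero_pad_mat p p (A * transpose_mat A)"
    and "transpose_mat (zero_pad_mat p q A) * zero_pad_mat p q A = zero_pad_mat q q (transpose_mat A * A)"
proof -
  have A: "A \<in> carrier_mat (dim_row A) (dim_col A)"
    and At: "transpose_mat A \<in> carrier_mat (dim_col A) (dim_row A)" by auto
  show "zero_pad_mat p q A * transpose_mat (zero_pad_mat p q A) = zero_pad_mat p p (A * transpose_mat A)"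
    unfolding transpose_zero_pad_mat by (rule mult_zero_pad_mat[OF A At])
  show "transpose_mat (zero_pad_mat p q A) * zero_pad_mat p q A = zero_pad_mat q q (transpose_mat A * A)"
    unfolding transpose_zero_pad_mat by (rule mult_zero_pad_mat[OF At A])
qed

lemma gram_mates_zero_pad_iff [simp]:
  "gram_mates (zero_pad_mat p q A) (zero_pad_mat p q B) \<longleftrightarrow> gram_mates A B"
  unfolding gram_mates_def by (auto simp: zero_pad_mat_gram)

lemma four_block_mat_upper_left_eq:
  assumes "four_block_mat A B C D = four_block_mat A' B' C' D'"
    and "dim_row A = dim_row A'" "dim_col A = dim_col A'"
  shows "A = A'"
proof (rule eq_matI)
  fix i j assume "i < dim_row A'" "j < dim_col A'"
  then show "A $$ (i, j) = A' $$ (i, j)"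
    using arg_cong[OF assms(1), of "\<lambda>M. M $$ (i, j)"] assms(2,3) by simp
qed (use assms in auto)

lemma add_right_cancel_mat:
  fixes X Y Z :: "'a :: cancel_semigroup_add mat"
  assumes "X + Z = Y + Z" "X \<in> carrier_mat m n" "Y \<in> carrier_mat m n" "Z \<in> carrier_mat m n"
  shows "X = Y"
proof (rule eq_matI)
  fix i j assume "i < dim_row Y" "j < dim_col Y"
  then show "X $$ (i, j) = Y $$ (i, j)"
    using arg_cong[OF assms(1), of "\<lambda>M. M $$ (i, j)"] assms(2-4) by simp
qed (use assms in auto)

lemma four_block_mat_gram_upper_left_eq:
  fixes A A' :: "'a :: semiring_0_cancel mat"
  assumes c: "A \<in> carrier_mat m n" "A' \<in> carrier_mat m n"
    "B \<in> carrier_mat m q" "C \<in> carrier_mat p n" "D \<in> carrier_mat p q"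
    and eq: "four_block_mat A B C D * transpose_mat (four_block_mat A B C D)
      = four_block_mat A' B C D * transpose_mat (four_block_mat A' B C D)"
  shows "A * transpose_mat A = A' * transpose_mat A'"
proof -
  have gram: "four_block_mat X B C D * transpose_mat (four_block_mat X B C D)
    = four_block_mat (X * transpose_mat X + B * transpose_mat B) (X * transpose_mat C + B * transpose_mat D)
        (C * transpose_mat X + D * transpose_mat B) (C * transpose_mat C + D * transpose_mat D)"
    if X: "X \<in> carrier_mat m n" for X
    using X c unfolding transpose_four_block_mat[OF X c(3-5)]
    by (subst mult_four_block_mat[of _ m n _ q _ p _ _ m _ p]) auto
  have "A * transpose_mat A + B * transpose_mat B = A' * transpose_mat A' + B * transpose_mat B"
    using four_block_mat_upper_left_eq[OF eq[unfolded gram[OF c(1)] gram[OF c(2)]]] c by simp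
  then show ?thesis
    by (rule add_right_cancel_mat) (use c in auto)
qed

lemma zero_one_mat_four_block_upper_left:
  "zero_one_mat (four_block_mat A B C D) \<Longrightarrow> zero_one_mat A"
  unfolding zero_one_mat_def by (metis index_mat_four_block trans_less_add1)

lemma gram_mates_four_block_upper_left:
  assumes c: "A \<in> carrier_mat m n" "A' \<in> carrier_mat m n"
    "B \<in> carrier_mat m q" "C \<in> carrier_mat p n" "D \<in> carrier_mat p q"
    and mates: "gram_mates (four_block_mat A B C D) (four_block_mat A' B C D)"
  shows "gram_mates A A'"
proof -
  let ?M = "four_block_mat A B C D" and ?M' = "four_block_mat A' B C D"
  from mates have row_gram: "?M * transpose_mat ?M = ?M' * transpose_mat ?M'"
    and col_gram: "transpose_mat ?M * ?M = transpose_mat ?M' * ?M'"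
    and zero_one: "zero_one_mat ?M" "zero_one_mat ?M'"
    and distinct: "?M \<noteq> ?M'"
    unfolding gram_mates_def by blast+
  have transpose_blocks: "transpose_mat (four_block_mat X B C D)
      = four_block_mat (transpose_mat X) (transpose_mat C) (transpose_mat B) (transpose_mat D)"
    if "X \<in> carrier_mat m n" for X
    by (rule transpose_four_block_mat[OF that c(3-5)])
  have "A * transpose_mat A = A' * transpose_mat A'"
    by (rule four_block_mat_gram_upper_left_eq[OF c row_gram])
  moreover have "transpose_mat A * transpose_mat (transpose_mat A)
      = transpose_mat A' * transpose_mat (transpose_mat A')"
  proof (rule four_block_mat_gram_upper_left_eq)
    show "four_block_mat (transpose_mat A) (transpose_mat C) (transpose_mat B) (transpose_mat D)
        * transpose_mat (four_block_mat (transpose_mat A) (transpose_mat C) (transpose_mat B) (transpose_mat D))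
      = four_block_mat (transpose_mat A') (transpose_mat C) (transpose_mat B) (transpose_mat D)
        * transpose_mat (four_block_mat (transpose_mat A') (transpose_mat C) (transpose_mat B) (transpose_mat D))"
      using col_gram unfolding transpose_blocks[OF c(1), symmetric] transpose_blocks[OF c(2), symmetric]
      by simp
  qed (use c in auto)
  moreover have "A \<noteq> A'"
    using distinct by blast
  moreover have "zero_one_mat A" "zero_one_mat A'"
    using zero_one zero_one_mat_four_block_upper_left by blast+
  ultimately show ?thesis
    using c unfolding gram_mates_def by simp
qed

lemma realizable_zero_pad_iff:
  "realizable (zero_pad_mat p q E) \<longleftrightarrow> realizable E"
proof
  let ?m = "dim_row E" and ?n = "dim_col E"
  have E: "E \<in> carrier_mat ?m ?n" by simp
  assume "realizable (zero_pad_mat p q E)"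
  then obtain A where A: "A \<in> carrier_mat (?m + p) (?n + q)"
      "gram_mates A (A + zero_pad_mat p q E)"
    and E_entries: "zero_one_neg_mat E" and E_sums: "zero_line_sums E"
    by (auto simp: realizable_def)
  obtain A1 A2 A3 A4 where "split_block A ?m ?n = (A1, A2, A3, A4)"
    by (metis prod_cases4)
  note blocks = split_block[OF this carrier_matD[OF A(1)]]
  have "A + zero_pad_mat p q E
      = four_block_mat A1 A2 A3 A4 + four_block_mat E (0\<^sub>m ?m q) (0\<^sub>m p ?n) (0\<^sub>m p q)"
    by (simp add: blocks(5) zero_pad_mat_def)
  also have "\<dots> = four_block_mat (A1 + E) (A2 + 0\<^sub>m ?m q) (A3 + 0\<^sub>m p ?n) (A4 + 0\<^sub>m p q)"
    by (rule add_four_block_mat[OF blocks(1-4) E]) auto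
  also have "\<dots> = four_block_mat (A1 + E) A2 A3 A4"
    using blocks(2-4) by simp
  finally have "gram_mates (four_block_mat A1 A2 A3 A4) (four_block_mat (A1 + E) A2 A3 A4)"
    using A(2) by (simp add: blocks(5))
  moreover have "A1 + E \<in> carrier_mat ?m ?n"
    using blocks(1) by simp
  ultimately have "gram_mates A1 (A1 + E)"
    using gram_mates_four_block_upper_left blocks(1-4) by blast
  moreover have "zero_one_mat A1"
    using \<open>gram_mates A1 (A1 + E)\<close> by (simp add: gram_mates_def)
  ultimately show "realizable E"
    using E_entries E_sums blocks(1) by (auto simp: realizable_def)
next
  assume "realizable E"
  then obtain A where A: "A \<in> carrier_mat (dim_row E) (dim_col E)" "zero_one_mat A"
      "gram_mates A (A + E)"
    and E: "zero_one_neg_mat E" "zero_line_sums E"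
    by (auto simp: realizable_def)
  then have "gram_mates (zero_pad_mat p q A) (zero_pad_mat p q A + zero_pad_mat p q E)"
    by (simp add: add_zero_pad_mat)
  moreover have "zero_pad_mat p q A \<in> carrier_mat (dim_row E + p) (dim_col E + q)"
    using A(1) by auto
  ultimately show "realizable (zero_pad_mat p q E)"
    using A(2) E unfolding realizable_def by auto
qed

theorem proposition4p3:
  fixes Et :: "int mat" and m n p q :: nat
  assumes "Et \<in> carrier_mat m n"
    and "zero_one_neg_mat (four_block_mat Et (0\<^sub>m m q) (0\<^sub>m p n) (0\<^sub>m p q))"
    and "zero_line_sums (four_block_mat Et (0\<^sub>m m q) (0\<^sub>m p n) (0\<^sub>m p q))"
  shows "realizable (four_block_mat Et (0\<^sub>m m q) (0\<^sub>m p n) (0\<^sub>m p q)) \<longleftrightarrow> realizable Et"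
proof -
  have "four_block_mat Et (0\<^sub>m m q) (0\<^sub>m p n) (0\<^sub>m p q) = zero_pad_mat p q Et"
    using assms(1) by (simp add: zero_pad_mat_def)
  then show ?thesis
    by (simp add: realizable_zero_pad_iff)
qed

end
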